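(* Let $\alpha\in(0,1]$ and let $G$ be a planar 3-tree with $n$ vertices. Then the tree $T(G)$ has at most $2n^{1-\alpha}$ hubs.
   Context: A planar 3-tree $G$ is constructed by starting from a triangle and repeatedly inserting a new vertex $u$ into a triangular face $\Delta=v_1v_2v_3$ of the current plane graph, joining $u$ to $v_1,v_2,v_3$. This process is encoded by a rooted tree $T=T(G)$: its nodes are triangles of $G$, its root is the initial triangle, and when $u$ is inserted into the face $\Delta=v_1v_2v_3$ (which is currently a leaf of $T$), the node $\Delta$ receives three children, the triangles $v_1v_2u$, $v_1uv_3$ and $uv_2v_3$. For a node $\Delta$ of $T$, let $V_\Delta$ be the set of vertices of $G$ lying in the interior of $\Delta$ (equivalently, the vertices inserted at nodes of the subtree rooted at $\Delta$), and $\mathrm{weight}(\Delta)=|V_\Delta|$. A node is heavy if its weight is at least $n^\alpha$. Hubs are defined top-down: the root of $T$ is a hub, and a non-root node $\Delta$ is a hub if $n^\alpha\le \mathrm{weight}(\Delta)\le \mathrm{weight}(\Delta')-n^\alpha$ for every hub $\Delta'$ that is an ancestor of $\Delta$. *)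

theory Defs
  imports Complex_Main
begin

text \<open>A leaf is a face (triangle) into which
no vertex is inserted; a node Ins u c1 c2 c3 records that vertex u is inserted
into the current triangle v1 v2 v3, the children being (in this order) the
triangles v1 v2 u, v1 u v3 and u v2 v3.\<close>

datatype 'v ctree = Leaf | Ins 'v "'v ctree" "'v ctree" "'v ctree"

fun inserted :: "'v ctree \<Rightarrow> 'v list" where
  "inserted Leaf = []"
| "inserted (Ins u a b c) = u # inserted a @ inserted b @ inserted c"

fun cedges :: "'v \<times> 'v \<times> 'v \<Rightarrow> 'v ctree \<Rightarrow> 'v set set" where
  "cedges (v1, v2, v3) Leaf = {}"
| "cedges (v1, v2, v3) (Ins u a b c) =
     {{u, v1}, {u, v2}, {u, v3}} \<union> cedges (v1, v2, u) a \<union> cedges (v1, u, v3) b \<union> cedges (u, v2, v3) c"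

definition valid_construction :: "'v \<times> 'v \<times> 'v \<Rightarrow> 'v ctree \<Rightarrow> bool" where
  "valid_construction \<Delta> t \<longleftrightarrow>
     (case \<Delta> of (v1, v2, v3) \<Rightarrow> distinct ([v1, v2, v3] @ inserted t))"

definition graph_vertices :: "'v \<times> 'v \<times> 'v \<Rightarrow> 'v ctree \<Rightarrow> 'v set" where
  "graph_vertices \<Delta> t = (case \<Delta> of (v1, v2, v3) \<Rightarrow> {v1, v2, v3} \<union> set (inserted t))"

definition graph_edges :: "'v \<times> 'v \<times> 'v \<Rightarrow> 'v ctree \<Rightarrow> 'v set set" where
  "graph_edges \<Delta> t = (case \<Delta> of (v1, v2, v3) \<Rightarrow> {{v1, v2}, {v2, v3}, {v1, v3}} \<union> cedges \<Delta> t)"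

text \<open>Nodes of T are addressed by paths (lists of child indices 0,1,2) from the root.\<close>
fun subtree :: "'v ctree \<Rightarrow> nat list \<Rightarrow> 'v ctree" where
  "subtree t [] = t"
| "subtree Leaf (i # p) = Leaf"
| "subtree (Ins u a b c) (i # p) =
     (if i = 0 then subtree a p else if i = 1 then subtree b p else subtree c p)"

fun is_node :: "'v ctree \<Rightarrow> nat list \<Rightarrow> bool" where
  "is_node t [] = True"
| "is_node Leaf (i # p) = False"
| "is_node (Ins u a b c) (i # p) =
     (if i = 0 then is_node a p else if i = 1 then is_node b p else if i = 2 then is_node c p else False)"

definition nodes :: "'v ctree \<Rightarrow> nat list set" where
  "nodes t = {p. is_node t p}"

definition V_of :: "'v ctree \<Rightarrow> nat list \<Rightarrow> 'v set" where
  "V_of t p = set (inserted (subtree t p))"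

definition weight :: "'v ctree \<Rightarrow> nat list \<Rightarrow> nat" where
  "weight t p = card (V_of t p)"

text \<open>Hubs, defined top-down with threshold x = n powr alpha.  Ancestors of p are its
proper prefixes take k p, k < length p.\<close>
function is_hub :: "'v ctree \<Rightarrow> real \<Rightarrow> nat list \<Rightarrow> bool" where
  "is_hub t x p \<longleftrightarrow> is_node t p \<and>
     (p = [] \<or>
      (x \<le> real (weight t p) \<and>
       (\<forall>k \<in> {..<length p}. is_hub t x (take k p) \<longrightarrow>
           real (weight t p) \<le> real (weight t (take k p)) - x)))"
  by pat_completeness auto
termination
  by (relation "measure (\<lambda>(t, x, p). length p)") auto

declare is_hub.simps [simp del]

definition hubs :: "'v ctree \<Rightarrow> real \<Rightarrow> nat list set" where
  "hubs t x = {p. is_hub t x p}"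

end

theory Submission
  imports Defs
begin

text \<open>Measure weights in units of the threshold x = n powr \<alpha>.  Below the root, a node is a
hub iff its weight lies between x and its budget, the least value of weight minus x over its
hub ancestors.  Since a hub outweighs the hub nodes below it by the vertex it inserts, and by
at least x if it has a single hub child, induction shows that a subtree of weight w with
budget b contains at most 2w - 2 hubs if it has at least two topmost hubs and at most
2 min w b - 1 if it has exactly one.  At the root this gives at most 2n/x hubs.\<close>

lemma subtree_Leaf [simp]: "subtree Leaf p = Leaf"
  by (cases p) auto

lemma is_node_Leaf [simp]: "is_node Leaf p \<longleftrightarrow> p = []"
  by (cases p) auto

lemma subtree_append: "subtree t (p @ q) = subtree (subtree t p) q"
  by (induction t p rule: subtree.induct) auto

lemma is_node_append: "is_node t (p @ q) \<longleftrightarrow> is_node t p \<and> is_node (subtree t p) q"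
  by (induction t p rule: is_node.induct) auto

lemma weight_subtree: "weight t p = weight (subtree t p) []"
  by (simp add: weight_def V_of_def)

lemma weight_eq_length: "distinct (inserted s) \<Longrightarrow> weight s [] = length (inserted s)"
  by (simp add: weight_def V_of_def distinct_card)

lemma weight_Ins:
  assumes "distinct (inserted (Ins u a b c))"
  shows "weight (Ins u a b c) [] = 1 + weight a [] + weight b [] + weight c []"
  using assms by (simp add: weight_eq_length)

lemma is_hub_Nil [simp]: "is_hub t x []"
  by (subst is_hub.simps) simp

lemma is_hub_is_node: "is_hub t x p \<Longrightarrow> is_node t p"
  by (subst (asm) is_hub.simps) simp

text \<open>B is the least value of weight minus x over the hub ancestors of q; the \<forall>y-form
avoids taking a minimum.\<close>

definition hub_budget :: "'v ctree \<Rightarrow> real \<Rightarrow> nat list \<Rightarrow> real \<Rightarrow> bool" where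
  "hub_budget t x q B \<longleftrightarrow>
     (\<forall>y. y \<le> B \<longleftrightarrow> (\<forall>k<length q. is_hub t x (take k q) \<longrightarrow> y \<le> real (weight t (take k q)) - x))"

lemma is_hub_iff_budget:
  assumes "q \<noteq> []" and "hub_budget t x q B"
  shows "is_hub t x q \<longleftrightarrow> is_node t q \<and> x \<le> real (weight t q) \<and> real (weight t q) \<le> B"
  using assms by (subst is_hub.simps) (auto simp: hub_budget_def)

lemma hub_budget_singleton: "hub_budget t x [i] (real (weight t []) - x)"
  by (simp add: hub_budget_def)

lemma hub_budget_snoc:
  assumes "hub_budget t x q B"
  shows "hub_budget t x (q @ [i]) (if is_hub t x q then min B (real (weight t q) - x) else B)"
proof -
  have "(\<forall>k<length (q @ [i]). is_hub t x (take k (q @ [i])) \<longrightarrow> y \<le> real (weight t (take k (q @ [i]))) - x)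
    \<longleftrightarrow> (\<forall>k<length q. is_hub t x (take k q) \<longrightarrow> y \<le> real (weight t (take k q)) - x)
        \<and> (is_hub t x q \<longrightarrow> y \<le> real (weight t q) - x)" for y
    by (auto simp: less_Suc_eq)
  then show ?thesis
    using assms by (auto simp: hub_budget_def)
qed

lemma not_is_hub_below_Leaf:
  assumes "0 < x" and "subtree t q = Leaf" and "q \<noteq> []" and "hub_budget t x q B"
  shows "\<not> is_hub t x (q @ p)"
proof
  assume hub: "is_hub t x (q @ p)"
  then have "is_node t (q @ p)" by (rule is_hub_is_node)
  with assms(2) have "p = []" by (simp add: is_node_append)
  with hub assms show False
    by (simp add: is_hub_iff_budget weight_subtree[of t q] weight_def V_of_def)
qed

fun local_hubs :: "real \<Rightarrow> 'v ctree \<Rightarrow> real \<Rightarrow> nat list set" where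
  "local_hubs x Leaf B = {}"
| "local_hubs x (Ins u a b c) B =
     (let w = real (weight (Ins u a b c) []);
          here = (x \<le> w \<and> w \<le> B);
          B' = (if here then w - x else B)
      in (if here then {[]} else {}) \<union>
         Cons 0 ` local_hubs x a B' \<union> Cons 1 ` local_hubs x b B' \<union> Cons 2 ` local_hubs x c B')"

lemma local_hubs_Cons_index: "i # p \<in> local_hubs x s B \<Longrightarrow> i \<le> 2"
  by (cases s) (auto simp: Let_def split: if_splits)

lemma is_hub_append_iff_local_hubs:
  assumes "0 < x"
  shows "subtree t q = s \<Longrightarrow> is_node t q \<Longrightarrow> q \<noteq> [] \<Longrightarrow> hub_budget t x q B \<Longrightarrow>
    is_hub t x (q @ p) \<longleftrightarrow> p \<in> local_hubs x s B"
proof (induction s arbitrary: q B p)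
  case Leaf
  then show ?case using not_is_hub_below_Leaf[OF assms] by simp
next
  case (Ins u a b c)
  define w where "w = real (weight (Ins u a b c) [])"
  define B' where "B' = (if x \<le> w \<and> w \<le> B then w - x else B)"
  have weight_q: "real (weight t q) = w"
    using Ins.prems(1) by (simp add: weight_subtree[of t q] w_def)
  have hub_q: "is_hub t x q \<longleftrightarrow> x \<le> w \<and> w \<le> B"
    using Ins.prems by (simp add: is_hub_iff_budget weight_q)
  have budget_child: "hub_budget t x (q @ [i]) B'" for i
    using hub_budget_snoc[OF Ins.prems(4), of i] assms
    unfolding weight_q hub_q B'_def by (auto simp: min_def)
  have child: "subtree t (q @ [i]) = (if i = 0 then a else if i = 1 then b else c)"
    "is_node t (q @ [i]) \<longleftrightarrow> i \<le> 2" for i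
    using Ins.prems by (simp_all add: subtree_append is_node_append)
  have local_hubs_eq: "local_hubs x (Ins u a b c) B = (if x \<le> w \<and> w \<le> B then {[]} else {}) \<union>
      Cons 0 ` local_hubs x a B' \<union> Cons 1 ` local_hubs x b B' \<union> Cons 2 ` local_hubs x c B'"
    by (simp add: Let_def w_def B'_def)
  show ?case
  proof (cases p)
    case Nil
    then show ?thesis using hub_q local_hubs_eq by auto
  next
    case (Cons i p')
    have "q @ p = (q @ [i]) @ p'" using Cons by simp
    show ?thesis
    proof (cases "i \<le> 2")
      case False
      then have "\<not> is_hub t x (q @ p)"
        using Ins.prems Cons is_hub_is_node by (fastforce simp: is_node_append)
      then show ?thesis using local_hubs_Cons_index Cons False by blast
    next
      case True
      then consider "i = 0" | "i = 1" | "i = 2" by linarith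
      then show ?thesis
        using Ins.IH[of "q @ [i]" B' p'] child[of i] budget_child[of i] \<open>q @ p = _\<close> local_hubs_eq Cons
        by cases auto
    qed
  qed
qed

lemma finite_local_hubs [simp]: "finite (local_hubs x s B)"
  by (induction s arbitrary: B) (simp_all add: Let_def)

lemma card_Cons_images:
  assumes "finite A" "finite B" "finite C"
  shows "card (Cons (0::nat) ` A \<union> Cons 1 ` B \<union> Cons 2 ` C) = card A + card B + card C"
proof -
  have "card (Cons (0::nat) ` A \<union> Cons 1 ` B \<union> Cons 2 ` C)
      = card (Cons (0::nat) ` A \<union> Cons 1 ` B) + card (Cons 2 ` C)"
    using assms by (intro card_Un_disjoint) auto
  also have "card (Cons (0::nat) ` A \<union> Cons 1 ` B) = card (Cons (0::nat) ` A) + card (Cons 1 ` B)"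
    using assms by (intro card_Un_disjoint) auto
  finally show ?thesis by (simp add: card_image)
qed

text \<open>The three disjuncts bound the number h
of hubs in a subtree of weight w and budget b according to whether it contains no topmost
hub, at least two, or exactly one (whose weight is at most min w b).\<close>

definition hub_count_bound :: "real \<Rightarrow> real \<Rightarrow> real \<Rightarrow> bool" where
  "hub_count_bound h w b \<longleftrightarrow> h = 0 \<or> h \<le> 2 * w - 2 \<or> h \<le> 2 * min w b - 1"

lemma of_nat_eq_0_or_ge_1: "real k = 0 \<or> 1 \<le> real k"
  by (cases k) auto

lemma hub_count_bound_Ins_nonhub:
  fixes ha hb hc :: nat
  assumes "0 < e" "0 \<le> wa" "0 \<le> wb" "0 \<le> wc"
    and "hub_count_bound ha wa b" "hub_count_bound hb wb b" "hub_count_bound hc wc b"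
  shows "hub_count_bound (ha + hb + hc) (e + wa + wb + wc) b"
  using assms of_nat_eq_0_or_ge_1[of ha] of_nat_eq_0_or_ge_1[of hb] of_nat_eq_0_or_ge_1[of hc]
  unfolding hub_count_bound_def min_def of_nat_add of_nat_1 by (smt (verit))

lemma hub_count_bound_Ins_hub:
  fixes ha hb hc :: nat
  assumes "0 < e" "0 \<le> wa" "0 \<le> wb" "0 \<le> wc" "w = e + wa + wb + wc" "1 \<le> w" "w \<le> b"
    and "hub_count_bound ha wa (w - 1)" "hub_count_bound hb wb (w - 1)" "hub_count_bound hc wc (w - 1)"
  shows "hub_count_bound (1 + ha + hb + hc) w b"
  using assms of_nat_eq_0_or_ge_1[of ha] of_nat_eq_0_or_ge_1[of hb] of_nat_eq_0_or_ge_1[of hc]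
  unfolding hub_count_bound_def min_def of_nat_add of_nat_1 by (smt (verit))

lemma hub_count_root:
  fixes ha hb hc :: nat and w :: real
  assumes "0 < e" "0 \<le> wa" "0 \<le> wb" "0 \<le> wc" "w = e + wa + wb + wc"
    and "hub_count_bound ha wa (w - 1)" "hub_count_bound hb wb (w - 1)" "hub_count_bound hc wc (w - 1)"
  shows "real (1 + ha + hb + hc) \<le> max 1 (2 * w - 1)"
  using assms of_nat_eq_0_or_ge_1[of ha] of_nat_eq_0_or_ge_1[of hb] of_nat_eq_0_or_ge_1[of hc]
  unfolding hub_count_bound_def min_def of_nat_add of_nat_1 by (smt (verit))

lemma local_hubs_count_bound:
  assumes "0 < x" and "distinct (inserted s)"
  shows "hub_count_bound (card (local_hubs x s B)) (weight s [] / x) (B / x)"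
  using assms(2)
proof (induction s arbitrary: B)
  case Leaf
  then show ?case by (simp add: hub_count_bound_def)
next
  case (Ins u a b c)
  define w where "w = real (weight (Ins u a b c) [])"
  define here where "here \<longleftrightarrow> x \<le> w \<and> w \<le> B"
  define B' where "B' = (if here then w - x else B)"
  let ?ha = "card (local_hubs x a B')" and ?hb = "card (local_hubs x b B')"
    and ?hc = "card (local_hubs x c B')"
  define below where
    "below = Cons 0 ` local_hubs x a B' \<union> Cons 1 ` local_hubs x b B' \<union> Cons 2 ` local_hubs x c B'"
  have "local_hubs x (Ins u a b c) B = (if here then insert [] below else below)"
    by (simp add: Let_def w_def here_def B'_def below_def)
  moreover have "card below = ?ha + ?hb + ?hc"
    unfolding below_def by (rule card_Cons_images) simp_all
  moreover have "[] \<notin> below" and "finite below"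
    by (auto simp: below_def)
  ultimately have card: "card (local_hubs x (Ins u a b c) B) = (if here then 1 else 0) + ?ha + ?hb + ?hc"
    by simp
  have bounds: "hub_count_bound ?ha (weight a [] / x) (B' / x)"
    "hub_count_bound ?hb (weight b [] / x) (B' / x)" "hub_count_bound ?hc (weight c [] / x) (B' / x)"
    using Ins by auto
  have w_sum: "w / x = 1 / x + weight a [] / x + weight b [] / x + weight c [] / x"
    using weight_Ins[OF Ins.prems] by (simp add: w_def add_divide_distrib)
  show ?case
  proof (cases here)
    case True
    then have "B' / x = w / x - 1" "1 \<le> w / x" "w / x \<le> B / x"
      using assms(1) by (simp_all add: B'_def here_def diff_divide_distrib divide_right_mono)
    then show ?thesis
      using hub_count_bound_Ins_hub[OF _ _ _ _ w_sum] bounds True assms(1) card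
      by (simp add: w_def)
  next
    case False
    then show ?thesis
      using hub_count_bound_Ins_nonhub[of "1 / x"] bounds assms(1) card w_sum
      by (simp add: B'_def w_def)
  qed
qed

lemma hubs_Ins:
  fixes x :: real
  assumes "0 < x"
  shows "hubs (Ins u a b c) x = insert []
    (Cons 0 ` local_hubs x a (real (weight (Ins u a b c) []) - x) \<union>
     Cons 1 ` local_hubs x b (real (weight (Ins u a b c) []) - x) \<union>
     Cons 2 ` local_hubs x c (real (weight (Ins u a b c) []) - x))"
proof -
  let ?t = "Ins u a b c" and ?B = "real (weight (Ins u a b c) []) - x"
  have hub_child: "is_hub ?t x (i # p) \<longleftrightarrow> i \<le> 2 \<and> p \<in> local_hubs x (subtree ?t [i]) ?B" for i p
  proof (cases "i \<le> 2")
    case True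
    then have "is_node ?t [i]" by auto
    from is_hub_append_iff_local_hubs[OF assms refl this _ hub_budget_singleton] True
    show ?thesis by simp
  next
    case False
    then show ?thesis using is_hub_is_node[of ?t x "i # p"] by auto
  qed
  show ?thesis
  proof (intro set_eqI)
    fix p
    show "p \<in> hubs ?t x \<longleftrightarrow> p \<in> insert [] (Cons 0 ` local_hubs x a ?B \<union>
        Cons 1 ` local_hubs x b ?B \<union> Cons 2 ` local_hubs x c ?B)"
    proof (cases p)
      case Nil
      then show ?thesis by (simp add: hubs_def)
    next
      case (Cons i p')
      then show ?thesis
        using hub_child[of i p'] by (cases "i = 0"; cases "i = 1"; cases "i = 2") (auto simp: hubs_def)
    qed
  qed
qed

lemma card_hubs_le:
  fixes x :: real
  assumes "0 < x" and "distinct (inserted t)"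
  shows "real (card (hubs t x)) \<le> max 1 (2 * real (weight t []) / x - 1)"
proof (cases t)
  case Leaf
  then have "hubs t x = {[]}"
    using is_hub_is_node by (fastforce simp: hubs_def)
  then show ?thesis by simp
next
  case (Ins u a b c)
  define B where "B = real (weight t []) - x"
  let ?ha = "card (local_hubs x a B)" and ?hb = "card (local_hubs x b B)"
    and ?hc = "card (local_hubs x c B)"
  define below where
    "below = Cons 0 ` local_hubs x a B \<union> Cons 1 ` local_hubs x b B \<union> Cons 2 ` local_hubs x c B"
  have "hubs t x = insert [] below"
    using hubs_Ins[OF assms(1)] by (simp add: Ins B_def below_def)
  moreover have "card below = ?ha + ?hb + ?hc"
    unfolding below_def by (rule card_Cons_images) simp_all
  moreover have "[] \<notin> below" and "finite below"
    by (auto simp: below_def)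
  ultimately have card: "card (hubs t x) = 1 + ?ha + ?hb + ?hc"
    by simp
  have w_sum: "weight t [] / x = 1 / x + weight a [] / x + weight b [] / x + weight c [] / x"
    using weight_Ins[of u a b c] assms(2) by (simp add: Ins add_divide_distrib)
  have budget: "B / x = weight t [] / x - 1"
    using assms(1) by (simp add: B_def diff_divide_distrib)
  have "hub_count_bound ?ha (weight a [] / x) (weight t [] / x - 1)"
    "hub_count_bound ?hb (weight b [] / x) (weight t [] / x - 1)"
    "hub_count_bound ?hc (weight c [] / x) (weight t [] / x - 1)"
    unfolding budget[symmetric] using local_hubs_count_bound[OF assms(1)] assms(2) by (auto simp: Ins)
  then have "real (1 + ?ha + ?hb + ?hc) \<le> max 1 (2 * (weight t [] / x) - 1)"
    using assms(1) by (intro hub_count_root[OF _ _ _ _ w_sum]) auto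
  then show ?thesis
    by (simp add: card)
qed

theorem lemma2:
  fixes v1 v2 v3 :: 'v and t :: "'v ctree" and \<alpha> :: real and n :: nat
  assumes "valid_construction (v1, v2, v3) t"
    and "0 < \<alpha>" and "\<alpha> \<le> 1"
    and "n = card (graph_vertices (v1, v2, v3) t)"
  shows "real (card (hubs t (real n powr \<alpha>))) \<le> 2 * real n powr (1 - \<alpha>)"
proof -
  have distinct: "distinct ([v1, v2, v3] @ inserted t)"
    using assms(1) by (simp add: valid_construction_def)
  then have n_eq: "real n = 3 + real (weight t [])"
    using assms(4) distinct_card[OF distinct] by (simp add: graph_vertices_def weight_eq_length)
  define x where "x = real n powr \<alpha>"
  have x_pos: "0 < x"
    using n_eq by (simp add: x_def)
  have "x \<le> real n powr 1"
    unfolding x_def using n_eq assms(3) by (intro powr_mono) auto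
  then have "x \<le> real n"
    using n_eq by simp
  then have "max 1 (2 * real (weight t []) / x - 1) \<le> 2 * real n / x"
    using x_pos n_eq by (simp add: field_simps)
  moreover have "2 * real n powr (1 - \<alpha>) = 2 * real n / x"
    using n_eq by (simp add: x_def powr_diff)
  ultimately show ?thesis
    using card_hubs_le[OF x_pos] distinct by (fastforce simp: x_def)
qed

end
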